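(* For $k\ge1$, the linear simplex $\alpha$ code $\mathcal{S}_k^\alpha$ has type $(q^{sk};k,0,\dots,0)$.
   Context: Let $R$ be a finite commutative chain ring with maximal ideal $\langle\gamma\rangle$, nilpotency index $s$ and residue field $R/\langle\gamma\rangle\cong\mathbb{F}_q$. Fix coset representatives $T=\{e_0,\dots,e_{q-1}\}$ with $e_0=0,e_1=1$, ordered $e_0<\dots<e_{q-1}$; each $r\in R$ is uniquely $\sum_{i=0}^{s-1}r_i\gamma^i$, $r_i\in T$; order $R$ by $x>y$ iff $x_i>y_i$ in $T$ for the largest $i$ with $x_i\neq y_i$; list $R=\{\rho_0,\dots,\rho_{q^s-1}\}$ increasingly. $\mathbf{a}^{(m)}$ is the constant vector of length $m$. Define $G_1^\alpha=(\rho_0\ \cdots\ \rho_{q^s-1})$ and, for $k>1$, $G_k^\alpha$ as the $k\times q^{sk}$ matrix of $q^s$ column blocks, the $j$-th having first row $\boldsymbol{\rho_j}^{(q^{s(k-1)})}$ and $G_{k-1}^\alpha$ below. $\mathcal{S}_k^\alpha$ is the $R$-submodule of $R^{q^{sk}}$ generated by the rows of $G_k^\alpha$. A linear code $\mathcal{C}\subseteq R^n$ (an $R$-submodule) has type $(n;t_1,\dots,t_s)$ if $\mathcal{C}\cong\bigoplus_{i=1}^s (R/\langle\gamma^{s-i+1}\rangle)^{t_i}$ as $R$-modules (equivalently, up to column permutations and multiplication of columns by units it has a standard-form generator matrix with $t_i$ rows divisible exactly by $\gamma^{i-1}$ forming the diagonal block $\gamma^{i-1}I_{t_i}$); these $t_i$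 are unique. Type $(n;k,0,\dots,0)$ means $\mathcal{C}$ is free of rank $k$. *)

theory Defs
  imports Main
begin

definition is_ideal :: "'r::comm_ring_1 set \<Rightarrow> bool" where
  "is_ideal I \<longleftrightarrow> 0 \<in> I \<and> (\<forall>x\<in>I. \<forall>y\<in>I. x + y \<in> I) \<and> (\<forall>r. \<forall>x\<in>I. r * x \<in> I)"

definition principal_ideal :: "'r::comm_ring_1 \<Rightarrow> 'r set" where
  "principal_ideal g = range (\<lambda>x. g * x)"

definition maximal_ideal :: "'r::comm_ring_1 set \<Rightarrow> bool" where
  "maximal_ideal M \<longleftrightarrow> is_ideal M \<and> M \<noteq> UNIV \<and>
     (\<forall>J. is_ideal J \<and> M \<subseteq> J \<longrightarrow> J = M \<or> J = UNIV)"

definition chain_ring :: "'r::comm_ring_1 itself \<Rightarrow> bool" where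
  "chain_ring _ \<longleftrightarrow> (\<forall>I J :: 'r set. is_ideal I \<and> is_ideal J \<longrightarrow> I \<subseteq> J \<or> J \<subseteq> I)"

text \<open>Standing assumptions: finite commutative chain ring with maximal ideal generated by
  gamma, nilpotency index s, and e 0,...,e (q-1) a system of coset representatives of the
  residue field (so the residue field has q elements), with e 0 = 0, e 1 = 1, ordered by index.\<close>
definition chain_ring_setup :: "'r::{comm_ring_1,finite} \<Rightarrow> nat \<Rightarrow> nat \<Rightarrow> (nat \<Rightarrow> 'r) \<Rightarrow> bool" where
  "chain_ring_setup \<gamma> s q e \<longleftrightarrow>
     chain_ring TYPE('r) \<and> maximal_ideal (principal_ideal \<gamma>) \<and>
     s \<ge> 1 \<and> \<gamma> ^ s = 0 \<and> \<gamma> ^ (s - 1) \<noteq> 0 \<and>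
     e 0 = 0 \<and> e 1 = 1 \<and>
     (\<forall>i<q. \<forall>j<q. e i - e j \<in> principal_ideal \<gamma> \<longrightarrow> i = j) \<and>
     (\<forall>r. \<exists>i<q. r - e i \<in> principal_ideal \<gamma>)"

definition digits :: "'r::comm_ring_1 \<Rightarrow> nat \<Rightarrow> nat \<Rightarrow> (nat \<Rightarrow> 'r) \<Rightarrow> 'r \<Rightarrow> nat \<Rightarrow> 'r" where
  "digits \<gamma> s q e r = (THE d. (\<forall>i<s. d i \<in> e ` {..<q}) \<and> (\<forall>i\<ge>s. d i = 0) \<and>
                              r = (\<Sum>i<s. d i * \<gamma> ^ i))"

definition tidx :: "nat \<Rightarrow> (nat \<Rightarrow> 'r) \<Rightarrow> 'r \<Rightarrow> nat" where
  "tidx q e t = (THE j. j < q \<and> e j = t)"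

definition ring_less :: "'r::comm_ring_1 \<Rightarrow> nat \<Rightarrow> nat \<Rightarrow> (nat \<Rightarrow> 'r) \<Rightarrow> 'r \<Rightarrow> 'r \<Rightarrow> bool" where
  "ring_less \<gamma> s q e x y \<longleftrightarrow>
     (\<exists>i<s. tidx q e (digits \<gamma> s q e x i) < tidx q e (digits \<gamma> s q e y i) \<and>
            (\<forall>j. i < j \<and> j < s \<longrightarrow> digits \<gamma> s q e x j = digits \<gamma> s q e y j))"

text \<open>rho j: the j-th element of R in increasing order (rho_0 < rho_1 < ...).\<close>
definition rho :: "'r::comm_ring_1 \<Rightarrow> nat \<Rightarrow> nat \<Rightarrow> (nat \<Rightarrow> 'r) \<Rightarrow> nat \<Rightarrow> 'r" where
  "rho \<gamma> s q e j = (THE x. card {y. ring_less \<gamma> s q e y x} = j)"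

text \<open>The generator matrix G_k^alpha (rows and columns indexed from 0): the j-th column block
  (of width (q^s)^(k-1)) has first row constantly rho_j and G_(k-1)^alpha below.\<close>
fun simplex_gen :: "'r::comm_ring_1 \<Rightarrow> nat \<Rightarrow> nat \<Rightarrow> (nat \<Rightarrow> 'r) \<Rightarrow> nat \<Rightarrow> nat \<Rightarrow> nat \<Rightarrow> 'r" where
  "simplex_gen \<gamma> s q e 0 r c = 0"
| "simplex_gen \<gamma> s q e (Suc k) 0 c = rho \<gamma> s q e (c div (q ^ s) ^ k)"
| "simplex_gen \<gamma> s q e (Suc k) (Suc r) c = simplex_gen \<gamma> s q e k r (c mod (q ^ s) ^ k)"

text \<open>Vectors of R^n are functions nat => R vanishing at indices >= n.
  The simplex code S_k^alpha: the R-submodule of R^(q^(sk)) generated by the rows of G_k^alpha.\<close>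
definition simplex_code :: "'r::comm_ring_1 \<Rightarrow> nat \<Rightarrow> nat \<Rightarrow> (nat \<Rightarrow> 'r) \<Rightarrow> nat \<Rightarrow> (nat \<Rightarrow> 'r) set" where
  "simplex_code \<gamma> s q e k =
     {v. \<exists>c :: nat \<Rightarrow> 'r. v = (\<lambda>i. if i < q ^ (s * k) then (\<Sum>r<k. c r * simplex_gen \<gamma> s q e k r i) else 0)}"

text \<open>A linear code C in R^n has type (n; t_1,...,t_s) (ts = [t_1,...,t_s]) iff C is isomorphic
  to the direct sum of (R/<gamma^(s-i+1)>)^(t_i): i.e. there are generators g i j (block i, 0-indexed,
  j < t_(i+1)) such that c |-> sum c i j * g i j maps all coefficient families onto C with
  kernel exactly the families with gamma^(s-i) dividing c i j.\<close>
definition code_type :: "'r::comm_ring_1 \<Rightarrow> nat \<Rightarrow> nat \<Rightarrow> (nat \<Rightarrow> 'r) set \<Rightarrow> nat list \<Rightarrow> bool" where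
  "code_type \<gamma> s n C ts \<longleftrightarrow>
     length ts = s \<and> C \<subseteq> {v. \<forall>i\<ge>n. v i = 0} \<and>
     (\<exists>g :: nat \<Rightarrow> nat \<Rightarrow> nat \<Rightarrow> 'r.
        (\<forall>i<s. \<forall>j<ts ! i. g i j \<in> C) \<and>
        C = {v. \<exists>c. v = (\<lambda>x. \<Sum>i<s. \<Sum>j<ts ! i. c i j * g i j x)} \<and>
        (\<forall>c. (\<forall>x. (\<Sum>i<s. \<Sum>j<ts ! i. c i j * g i j x) = 0) \<longleftrightarrow>
             (\<forall>i<s. \<forall>j<ts ! i. \<gamma> ^ (s - i) dvd c i j)))"

end

theory Submission
  imports Defs
begin

(* The map c \<mapsto> \<Sum>j c j * (row j of G_k) is injective: for every row j some column of G_k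
   has entry \<rho>_1 in row j and \<rho>_0 in all other rows, and \<rho>_0 = 0, \<rho>_1 = 1 because 0 is
   the least and 1 the next element of R.  Hence S_k is free of rank k, which (as \<gamma>^s = 0) is
   the type (q^(sk); k, 0, ..., 0).  Locating 0 and 1 in the order needs the \<gamma>-adic digits to
   be well defined; their uniqueness rests on every non-unit of the chain ring lying in \<langle>\<gamma>\<rangle>. *)

lemma principal_ideal_iff_dvd: "x \<in> principal_ideal g \<longleftrightarrow> g dvd x"
  by (auto simp: principal_ideal_def dvd_def)

lemma is_ideal_principal_ideal: "is_ideal (principal_ideal g)"
  unfolding is_ideal_def by (auto simp: principal_ideal_iff_dvd)

lemma chain_ring_not_unit_imp_dvd:
  fixes \<gamma> x :: "'r::comm_ring_1"
  assumes chain: "chain_ring TYPE('r)" and maximal: "maximal_ideal (principal_ideal \<gamma>)"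
    and "\<not> x dvd 1"
  shows "\<gamma> dvd x"
proof (rule ccontr)
  assume "\<not> \<gamma> dvd x"
  then have "\<not> principal_ideal x \<subseteq> principal_ideal \<gamma>"
    by (meson dvd_refl principal_ideal_iff_dvd subsetD)
  with chain have "principal_ideal \<gamma> \<subseteq> principal_ideal x"
    using is_ideal_principal_ideal unfolding chain_ring_def by blast
  with maximal have "principal_ideal x = principal_ideal \<gamma> \<or> principal_ideal x = UNIV"
    using is_ideal_principal_ideal unfolding maximal_ideal_def by blast
  moreover have "x \<in> principal_ideal x" "1 \<notin> principal_ideal x"
    using \<open>\<not> x dvd 1\<close> by (auto simp: principal_ideal_iff_dvd)
  ultimately show False
    using \<open>\<not> \<gamma> dvd x\<close> by (auto simp: principal_ideal_iff_dvd)
qed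

lemma simplex_gen_column_exists:
  assumes "\<forall>r<k. f r < q ^ s"
  shows "\<exists>c<(q ^ s) ^ k. \<forall>r<k. simplex_gen \<gamma> s q e k r c = rho \<gamma> s q e (f r)"
  using assms
proof (induction k arbitrary: f)
  case 0
  show ?case by simp
next
  case (Suc k)
  define Q where "Q = q ^ s"
  obtain c' where c': "c' < Q ^ k" "\<forall>r<k. simplex_gen \<gamma> s q e k r c' = rho \<gamma> s q e (f (Suc r))"
    using Suc.IH[of "\<lambda>r. f (Suc r)"] Suc.prems by (auto simp: Q_def)
  define c where "c = f 0 * Q ^ k + c'"
  have "c < (f 0 + 1) * Q ^ k" using c' by (simp add: c_def)
  also have "\<dots> \<le> Q * Q ^ k" using Suc.prems by (intro mult_right_mono) (auto simp: Q_def)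
  finally have "c < Q ^ Suc k" by simp
  moreover have "c div Q ^ k = f 0" "c mod Q ^ k = c'"
    using c'(1) le_less_trans[OF le0 c'(1)] by (simp_all add: c_def)
  ultimately show ?case
    using c'(2) by (intro exI[of _ c]) (auto simp: Q_def less_Suc_eq_0_disj)
qed

locale chain_ring_adic =
  fixes \<gamma> :: "'r::{comm_ring_1,finite}" and s q :: nat and e :: "nat \<Rightarrow> 'r"
  assumes standing: "chain_ring_setup \<gamma> s q e"
begin

abbreviation digit :: "'r \<Rightarrow> nat \<Rightarrow> 'r" where "digit \<equiv> digits \<gamma> s q e"
abbreviation rless :: "'r \<Rightarrow> 'r \<Rightarrow> bool" where "rless \<equiv> ring_less \<gamma> s q e"

lemma s_ge_1: "s \<ge> 1" and gamma_power_s: "\<gamma> ^ s = 0" and gamma_power_pred: "\<gamma> ^ (s - 1) \<noteq> 0"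
  and e_0: "e 0 = 0" and e_1: "e 1 = 1"
  and rep_dvd_diff_imp_eq: "\<And>i j. i < q \<Longrightarrow> j < q \<Longrightarrow> \<gamma> dvd (e i - e j) \<Longrightarrow> i = j"
  and rep_exists: "\<And>r. \<exists>i<q. \<gamma> dvd (r - e i)"
  and chain: "chain_ring TYPE('r)" and maximal: "maximal_ideal (principal_ideal \<gamma>)"
  using standing by (simp_all add: chain_ring_setup_def principal_ideal_iff_dvd)

lemma not_unit_imp_gamma_dvd: "\<not> x dvd 1 \<Longrightarrow> \<gamma> dvd x"
  by (rule chain_ring_not_unit_imp_dvd[OF chain maximal])

lemma gamma_not_unit: "\<not> \<gamma> dvd 1"
proof
  assume "\<gamma> dvd 1"
  then have "principal_ideal \<gamma> = UNIV"
    by (auto simp: principal_ideal_iff_dvd dest: dvd_trans[OF _ one_dvd])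
  with maximal show False by (simp add: maximal_ideal_def)
qed

lemma q_ge_2: "q \<ge> 2"
proof (rule ccontr)
  assume "\<not> q \<ge> 2"
  moreover obtain i where "i < q" "\<gamma> dvd (1 - e i)" using rep_exists by blast
  ultimately have "\<gamma> dvd 1 - e 0" using less_2_cases[of i] by fastforce
  with e_0 gamma_not_unit show False by simp
qed

lemma ring_nontrivial: "(0::'r) \<noteq> 1"
  using rep_dvd_diff_imp_eq[of 1 0] q_ge_2 e_0 e_1 by auto

lemma gamma_power_nonzero: "j < s \<Longrightarrow> \<gamma> ^ j \<noteq> 0"
proof
  assume "j < s" "\<gamma> ^ j = 0"
  then have "s - 1 = j + (s - 1 - j)" by simp
  then have "\<gamma> ^ (s - 1) = \<gamma> ^ j * \<gamma> ^ (s - 1 - j)"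
    by (metis power_add)
  with \<open>\<gamma> ^ j = 0\<close> gamma_power_pred show False by simp
qed

lemma unit_add_gamma_mult: "\<not> \<gamma> dvd a \<Longrightarrow> (a + \<gamma> * t) dvd 1"
  using not_unit_imp_gamma_dvd dvd_add_right_iff[of \<gamma> "\<gamma> * t" a] by (auto simp: add.commute)

(* The lowest coefficient is either 0 or a unit, and \<gamma>^j times a unit is nonzero for j < s. *)
lemma adic_sum_eq_zero_imp_coeffs_zero:
  assumes "j + m \<le> s" "\<forall>i<m. \<gamma> dvd a i \<longrightarrow> a i = 0" "\<gamma> ^ j * (\<Sum>i<m. a i * \<gamma> ^ i) = 0"
  shows "\<forall>i<m. a i = 0"
  using assms
proof (induction m arbitrary: j a)
  case 0
  then show ?case by simp
next
  case (Suc m)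
  define t where "t = (\<Sum>i<m. a (Suc i) * \<gamma> ^ i)"
  have sum_split: "(\<Sum>i<Suc m. a i * \<gamma> ^ i) = a 0 + \<gamma> * t"
    unfolding t_def sum.lessThan_Suc_shift
    by (simp add: sum_distrib_left algebra_simps del: sum.lessThan_Suc)
  have "a 0 = 0"
  proof (rule ccontr)
    assume "a 0 \<noteq> 0"
    with Suc.prems(2) have "(a 0 + \<gamma> * t) dvd 1" by (auto intro: unit_add_gamma_mult)
    then obtain w where w: "(a 0 + \<gamma> * t) * w = 1" by (metis dvdE)
    have "\<gamma> ^ j = \<gamma> ^ j * ((a 0 + \<gamma> * t) * w)" by (simp only: w mult_1_right)
    also have "\<dots> = \<gamma> ^ j * (\<Sum>i<Suc m. a i * \<gamma> ^ i) * w" by (simp only: sum_split mult.assoc)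
    finally have "\<gamma> ^ j = 0" using Suc.prems(3) by simp
    with gamma_power_nonzero[of j] Suc.prems(1) show False by simp
  qed
  then have "\<gamma> ^ Suc j * t = \<gamma> ^ j * (a 0 + \<gamma> * t)" by (simp add: algebra_simps)
  also have "\<dots> = 0" using Suc.prems(3) by (simp only: sum_split)
  finally have "\<gamma> ^ Suc j * t = 0" .
  then have "\<forall>i<m. a (Suc i) = 0"
    using Suc.prems(1,2) by (intro Suc.IH[of "Suc j" "\<lambda>i. a (Suc i)"]) (simp_all add: t_def)
  with \<open>a 0 = 0\<close> show ?case by (auto simp: less_Suc_eq_0_disj)
qed

lemma adic_expansion_exists_upto:
  "\<exists>d t. (\<forall>i<m. d i \<in> e ` {..<q}) \<and> (\<forall>i\<ge>m. d i = 0) \<and> r = (\<Sum>i<m. d i * \<gamma> ^ i) + \<gamma> ^ m * t"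
proof (induction m)
  case 0
  show ?case by (intro exI[of _ "\<lambda>_. 0"] exI[of _ r]) simp
next
  case (Suc m)
  then obtain d t where d: "\<forall>i<m. d i \<in> e ` {..<q}" "\<forall>i\<ge>m. d i = 0"
    and r: "r = (\<Sum>i<m. d i * \<gamma> ^ i) + \<gamma> ^ m * t" by blast
  obtain j where j: "j < q" "\<gamma> dvd t - e j" using rep_exists by blast
  then obtain t' where "t - e j = \<gamma> * t'" by (blast elim: dvdE)
  then have t': "t = e j + \<gamma> * t'" by (simp add: algebra_simps)
  have "(\<Sum>i<m. (d(m := e j)) i * \<gamma> ^ i) = (\<Sum>i<m. d i * \<gamma> ^ i)"
    by (rule sum.cong) auto
  with r t' have "r = (\<Sum>i<Suc m. (d(m := e j)) i * \<gamma> ^ i) + \<gamma> ^ Suc m * t'"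
    by (simp add: algebra_simps)
  moreover have "\<forall>i<Suc m. (d(m := e j)) i \<in> e ` {..<q}" using d(1) j by (auto simp: less_Suc_eq)
  moreover have "\<forall>i\<ge>Suc m. (d(m := e j)) i = 0" using d(2) by auto
  ultimately show ?case by blast
qed

definition is_adic_expansion :: "'r \<Rightarrow> (nat \<Rightarrow> 'r) \<Rightarrow> bool" where
  "is_adic_expansion r d \<longleftrightarrow>
     (\<forall>i<s. d i \<in> e ` {..<q}) \<and> (\<forall>i\<ge>s. d i = 0) \<and> r = (\<Sum>i<s. d i * \<gamma> ^ i)"

lemma adic_expansion_exists: "\<exists>d. is_adic_expansion r d"
  using adic_expansion_exists_upto[of s r] gamma_power_s by (auto simp: is_adic_expansion_def)

lemma adic_expansion_unique:
  assumes "is_adic_expansion r d" "is_adic_expansion r d'"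
  shows "d = d'"
proof -
  define a where "a i = d i - d' i" for i
  have "(\<Sum>i<s. a i * \<gamma> ^ i) = (\<Sum>i<s. d i * \<gamma> ^ i) - (\<Sum>i<s. d' i * \<gamma> ^ i)"
    by (simp add: a_def algebra_simps sum_subtractf)
  also have "\<dots> = 0" using assms by (simp add: is_adic_expansion_def)
  finally have sum_zero: "\<gamma> ^ 0 * (\<Sum>i<s. a i * \<gamma> ^ i) = 0" by simp
  have digits_diff: "\<forall>i<s. \<gamma> dvd a i \<longrightarrow> a i = 0"
  proof (intro allI impI)
    fix i assume "i < s" "\<gamma> dvd a i"
    with assms obtain l l' where "l < q" "l' < q" "d i = e l" "d' i = e l'"
      unfolding is_adic_expansion_def by blast
    with \<open>\<gamma> dvd a i\<close> rep_dvd_diff_imp_eq[of l l'] show "a i = 0" by (simp add: a_def)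
  qed
  have "0 + s \<le> s" by simp
  from this digits_diff sum_zero have "\<forall>i<s. a i = 0"
    by (rule adic_sum_eq_zero_imp_coeffs_zero)
  show "d = d'"
  proof
    fix i
    show "d i = d' i"
    proof (cases "i < s")
      case True
      with \<open>\<forall>i<s. a i = 0\<close> show ?thesis by (simp add: a_def)
    next
      case False
      with assms show ?thesis unfolding is_adic_expansion_def by (simp add: not_less)
    qed
  qed
qed

lemma is_adic_expansion_digits: "is_adic_expansion r (digit r)"
proof -
  have "\<exists>!d. is_adic_expansion r d"
    using adic_expansion_exists adic_expansion_unique by blast
  then show ?thesis
    unfolding digits_def is_adic_expansion_def[symmetric] by (rule theI')
qed

lemma digits_eqI: "is_adic_expansion r d \<Longrightarrow> digit r = d"
  using adic_expansion_unique is_adic_expansion_digits by blast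

lemma digits_in_reps: "i < s \<Longrightarrow> \<exists>j<q. digit r i = e j"
  using is_adic_expansion_digits[of r] unfolding is_adic_expansion_def by blast

lemma sum_digits: "(\<Sum>i<s. digit r i * \<gamma> ^ i) = r"
  using is_adic_expansion_digits[of r] unfolding is_adic_expansion_def by (elim conjE) (erule sym)

lemma eq_if_digits_eq:
  assumes "\<And>i. i < s \<Longrightarrow> digit x i = digit y i"
  shows "x = y"
proof -
  have "(\<Sum>i<s. digit x i * \<gamma> ^ i) = (\<Sum>i<s. digit y i * \<gamma> ^ i)"
    using assms by (intro sum.cong) auto
  then show ?thesis by (simp only: sum_digits)
qed

lemma digits_zero: "digit 0 = (\<lambda>_. 0)"
  by (rule digits_eqI) (use q_ge_2 e_0 in \<open>auto simp: is_adic_expansion_def intro!: image_eqI[of _ _ 0]\<close>)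

lemma digits_one: "digit 1 = (\<lambda>i. if i = 0 then 1 else 0)"
proof (rule digits_eqI)
  have "(\<Sum>i<s. (if i = 0 then 1 else 0) * \<gamma> ^ i) = (\<Sum>i<s. if i = 0 then 1 else (0::'r))"
    by (rule sum.cong) auto
  also have "\<dots> = 1" using s_ge_1 by simp
  finally show "is_adic_expansion 1 (\<lambda>i. if i = 0 then 1 else 0)"
    using q_ge_2 e_0 e_1 s_ge_1 unfolding is_adic_expansion_def
    by (auto intro!: image_eqI[of _ _ 0] image_eqI[of _ _ 1])
qed

lemma tidx_rep: "l < q \<Longrightarrow> tidx q e (e l) = l"
  unfolding tidx_def
proof (rule the_equality)
  show "l < q \<and> e l = e l" if "l < q" using that by simp
  show "l' = l" if "l < q" "l' < q \<and> e l' = e l" for l'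
    using that rep_dvd_diff_imp_eq[of l' l] by simp
qed

lemma tidx_zero: "tidx q e 0 = 0" and tidx_one: "tidx q e 1 = 1"
  using tidx_rep[of 0] tidx_rep[of 1] q_ge_2 e_0 e_1 by simp_all

lemma tidx_digits_eq_iff:
  assumes "i < s" "j < q"
  shows "tidx q e (digit x i) = j \<longleftrightarrow> digit x i = e j"
proof -
  obtain l where "l < q" "digit x i = e l" using digits_in_reps assms(1) by blast
  with assms(2) tidx_rep[of l] rep_dvd_diff_imp_eq[of l j] show ?thesis by auto
qed

lemma top_differing_digit:
  assumes "x \<noteq> y"
  obtains i where "i < s" "digit x i \<noteq> digit y i" "\<And>j. i < j \<Longrightarrow> j < s \<Longrightarrow> digit x j = digit y j"
proof -
  define A where "A = {i. i < s \<and> digit x i \<noteq> digit y i}"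
  have "finite A" by (simp add: A_def)
  moreover have "A \<noteq> {}"
  proof
    assume "A = {}"
    then have "digit x i = digit y i" if "i < s" for i using that by (auto simp: A_def)
    then have "x = y" by (rule eq_if_digits_eq)
    with assms show False ..
  qed
  ultimately have max: "Max A \<in> A" "\<And>j. j \<in> A \<Longrightarrow> j \<le> Max A" by simp_all
  show ?thesis
  proof (rule that)
    show "Max A < s" "digit x (Max A) \<noteq> digit y (Max A)" using max(1) by (auto simp: A_def)
    show "digit x j = digit y j" if "Max A < j" "j < s" for j
    proof (rule ccontr)
      assume "digit x j \<noteq> digit y j"
      with \<open>j < s\<close> have "j \<in> A" by (simp add: A_def)
      with max(2) \<open>Max A < j\<close> show False by (simp add: leD)
    qed
  qed
qed

lemma not_ring_less_zero: "\<not> rless y 0"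
  by (simp add: ring_less_def digits_zero tidx_zero)

lemma zero_ring_less: assumes "x \<noteq> 0" shows "rless 0 x"
proof -
  obtain i where i: "i < s" "digit x i \<noteq> digit 0 i"
    and above: "\<And>j. i < j \<Longrightarrow> j < s \<Longrightarrow> digit x j = digit 0 j"
    using top_differing_digit[OF assms] by blast
  have "tidx q e (digit x i) \<noteq> 0"
    using i tidx_digits_eq_iff[of i 0 x] q_ge_2 e_0 by (simp add: digits_zero)
  then show ?thesis
    unfolding ring_less_def using i(1) above by (auto simp: digits_zero tidx_zero)
qed

lemma ring_less_one_imp_zero: assumes "rless y 1" shows "y = 0"
proof -
  obtain i where i: "i < s" "tidx q e (digit y i) < tidx q e (digit 1 i)"
    and above: "\<And>j. i < j \<Longrightarrow> j < s \<Longrightarrow> digit y j = digit 1 j"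
    using assms unfolding ring_less_def by blast
  have "i = 0" using i(2) by (cases "i = 0") (auto simp: digits_one tidx_zero)
  with i have "digit y 0 = 0" using tidx_digits_eq_iff[of 0 0 y] q_ge_2 e_0
    by (simp add: digits_one tidx_one)
  with above \<open>i = 0\<close> have "digit y j = digit 0 j" if "j < s" for j
    using that by (cases j) (auto simp: digits_zero digits_one)
  then show "y = 0" by (rule eq_if_digits_eq)
qed

lemma one_ring_less: assumes "x \<noteq> 0" "x \<noteq> 1" shows "rless 1 x"
proof -
  obtain i where i: "i < s" "digit x i \<noteq> digit 1 i"
    and above: "\<And>j. i < j \<Longrightarrow> j < s \<Longrightarrow> digit x j = digit 1 j"
    using top_differing_digit[OF assms(2)] by blast
  have "tidx q e (digit 1 i) < tidx q e (digit x i)"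
  proof (cases "i = 0")
    case True
    have "digit x 0 \<noteq> 0"
    proof
      assume "digit x 0 = 0"
      with above True have "digit x j = digit 0 j" if "j < s" for j
        using that by (cases j) (auto simp: digits_zero digits_one)
      then have "x = 0" by (rule eq_if_digits_eq)
      with assms(1) show False ..
    qed
    moreover have "digit x 0 \<noteq> 1" using i True by (simp add: digits_one)
    ultimately show ?thesis
      using True i(1) tidx_digits_eq_iff[of 0 0 x] tidx_digits_eq_iff[of 0 1 x] q_ge_2 e_0 e_1
      by (simp add: digits_one tidx_one)
  next
    case False
    then show ?thesis
      using i tidx_digits_eq_iff[of i 0 x] q_ge_2 e_0 by (simp add: digits_one tidx_zero)
  qed
  then show ?thesis
    unfolding ring_less_def using i(1) above by (metis (no_types))
qed

lemma rho_zero: "rho \<gamma> s q e 0 = 0"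
  unfolding rho_def
proof (rule the_equality)
  show "card {y. rless y 0} = 0" by (simp add: not_ring_less_zero)
  show "x = 0" if "card {y. rless y x} = 0" for x
  proof (rule ccontr)
    assume "x \<noteq> 0"
    then have "0 \<in> {y. rless y x}" by (simp add: zero_ring_less)
    then have "card {y. rless y x} > 0" by (auto simp: card_gt_0_iff)
    with that show False by simp
  qed
qed

lemma rho_one: "rho \<gamma> s q e 1 = 1"
  unfolding rho_def
proof (rule the_equality)
  have "{y. rless y 1} = {0}"
    using ring_less_one_imp_zero zero_ring_less ring_nontrivial by auto
  then show "card {y. rless y 1} = 1" by simp
  show "x = 1" if "card {y. rless y x} = 1" for x
  proof (rule ccontr)
    assume "x \<noteq> 1"
    have "x \<noteq> 0" using that by (auto simp: not_ring_less_zero)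
    with \<open>x \<noteq> 1\<close> have "{0, 1} \<subseteq> {y. rless y x}" by (simp add: zero_ring_less one_ring_less)
    then have "card {0, 1 :: 'r} \<le> card {y. rless y x}" by (intro card_mono) simp_all
    with that ring_nontrivial show False by simp
  qed
qed

lemma simplex_gen_rows_independent:
  assumes "\<And>x. x < q ^ (s * k) \<Longrightarrow> (\<Sum>r<k. c r * simplex_gen \<gamma> s q e k r x) = 0" "j < k"
  shows "c j = 0"
proof -
  have "1 < q ^ s" using q_ge_2 s_ge_1 by (intro one_less_power) auto
  then have "\<forall>r<k. (if r = j then 1 else 0) < q ^ s" using q_ge_2 by simp
  from simplex_gen_column_exists[where \<gamma> = \<gamma> and e = e, OF this]
  obtain x where x: "x < (q ^ s) ^ k"
    and col: "\<forall>r<k. simplex_gen \<gamma> s q e k r x = rho \<gamma> s q e (if r = j then 1 else 0)"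
    by blast
  have "(\<Sum>r<k. c r * simplex_gen \<gamma> s q e k r x) = (\<Sum>r<k. if r = j then c r else 0)"
    using col by (intro sum.cong) (auto simp: rho_zero rho_one[unfolded One_nat_def])
  also have "\<dots> = c j" using assms(2) by simp
  finally show ?thesis using assms(1) x by (simp add: power_mult)
qed

end

lemma sum_free_type_blocks:
  fixes k :: nat
  assumes "s \<ge> 1"
  shows "(\<Sum>i<s. \<Sum>j<(k # replicate (s - 1) 0) ! i. F i j) = (\<Sum>j<k. F 0 j)"
proof -
  obtain s' where "s = Suc s'" using assms by (cases s) auto
  then show ?thesis by (simp add: sum.lessThan_Suc_shift del: sum.lessThan_Suc)
qed

lemma all_free_type_blocks:
  fixes k :: nat
  assumes "s \<ge> 1"
  shows "(\<forall>i<s. \<forall>j<(k # replicate (s - 1) 0) ! i. P i j) \<longleftrightarrow> (\<forall>j<k. P 0 j)"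
proof -
  obtain s' where "s = Suc s'" using assms by (cases s) auto
  then show ?thesis by (auto simp: less_Suc_eq_0_disj)
qed

lemma code_type_freeI:
  fixes \<gamma> :: "'r::comm_ring_1" and g :: "nat \<Rightarrow> nat \<Rightarrow> 'r"
  assumes "s \<ge> 1" "\<gamma> ^ s = 0"
    and support: "\<And>j x. j < k \<Longrightarrow> x \<ge> n \<Longrightarrow> g j x = 0"
    and independent: "\<And>c j. (\<And>x. (\<Sum>r<k. c r * g r x) = 0) \<Longrightarrow> j < k \<Longrightarrow> c j = 0"
  shows "code_type \<gamma> s n {v. \<exists>c. v = (\<lambda>x. \<Sum>j<k. c j * g j x)} (k # replicate (s - 1) 0)"
proof -
  define C where "C = {v. \<exists>c. v = (\<lambda>x. \<Sum>j<k. c j * g j x)}"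
  define ts where "ts = k # replicate (s - 1) 0"
  have "C \<subseteq> {v. \<forall>x\<ge>n. v x = 0}" using support by (auto simp: C_def)
  moreover have "g j \<in> C" if "j < k" for j
  proof -
    have "(\<Sum>r<k. (if r = j then 1 else 0) * g r x) = (\<Sum>r<k. if r = j then g r x else 0)" for x
      by (rule sum.cong) auto
    then have "(\<Sum>r<k. (if r = j then 1 else 0) * g r x) = g j x" for x
      using that by simp
    then show ?thesis unfolding C_def by (intro CollectI exI[of _ "\<lambda>r. if r = j then 1 else 0"]) auto
  qed
  moreover have "C = {v. \<exists>c. v = (\<lambda>x. \<Sum>i<s. \<Sum>j<ts ! i. c i j * g j x)}"
    (is "_ = ?span")
  proof (intro equalityI subsetI)
    fix v assume "v \<in> C"
    then obtain c where "v = (\<lambda>x. \<Sum>j<k. c j * g j x)" by (auto simp: C_def)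
    then show "v \<in> ?span"
      unfolding ts_def sum_free_type_blocks[OF assms(1)] by (intro CollectI exI[of _ "\<lambda>_. c"]) simp
  next
    fix v assume "v \<in> ?span"
    then obtain c where "v = (\<lambda>x. \<Sum>i<s. \<Sum>j<ts ! i. c i j * g j x)" by blast
    then show "v \<in> C"
      unfolding C_def ts_def sum_free_type_blocks[OF assms(1)] by blast
  qed
  moreover have "(\<forall>x. (\<Sum>i<s. \<Sum>j<ts ! i. c i j * g j x) = 0) \<longleftrightarrow>
      (\<forall>i<s. \<forall>j<ts ! i. \<gamma> ^ (s - i) dvd c i j)" for c
    using independent[of "c 0"] assms(2)
    unfolding ts_def sum_free_type_blocks[OF assms(1)] all_free_type_blocks[OF assms(1)] by auto
  ultimately show ?thesis
    unfolding code_type_def C_def[symmetric] ts_def[symmetric]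
    using assms(1) all_free_type_blocks[OF assms(1), of k "\<lambda>_ j. g j \<in> C"]
    by (intro conjI exI[of _ "\<lambda>_. g"]) (auto simp: ts_def)
qed

theorem proposition3p1:
  fixes \<gamma> :: "'r::{comm_ring_1,finite}" and s q k :: nat and e :: "nat \<Rightarrow> 'r"
  assumes "chain_ring_setup \<gamma> s q e"
    and "k \<ge> 1"
  shows "code_type \<gamma> s (q ^ (s * k)) (simplex_code \<gamma> s q e k) (k # replicate (s - 1) 0)"
proof -
  interpret chain_ring_adic \<gamma> s q e by (rule chain_ring_adic.intro) (fact assms(1))
  define g where "g j x = (if x < q ^ (s * k) then simplex_gen \<gamma> s q e k j x else 0)" for j x
  have sum_g: "(\<Sum>j<k. c j * g j x) =
      (if x < q ^ (s * k) then \<Sum>j<k. c j * simplex_gen \<gamma> s q e k j x else 0)" for c x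
    by (simp add: g_def)
  then have "simplex_code \<gamma> s q e k = {v. \<exists>c. v = (\<lambda>x. \<Sum>j<k. c j * g j x)}"
    by (simp add: simplex_code_def)
  moreover have "c j = 0" if "\<And>x. (\<Sum>r<k. c r * g r x) = 0" "j < k" for c j
  proof (rule simplex_gen_rows_independent[OF _ that(2)])
    show "(\<Sum>r<k. c r * simplex_gen \<gamma> s q e k r x) = 0" if "x < q ^ (s * k)" for x
      using that \<open>\<And>x. (\<Sum>r<k. c r * g r x) = 0\<close>[of x] by (simp add: sum_g)
  qed
  ultimately show ?thesis
    using code_type_freeI[OF s_ge_1 gamma_power_s, of k "q ^ (s * k)" g] by (simp add: g_def)
qed

end
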